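(* Let $G$ be an $(n,d,\beta)$ expander with girth $g$, endowed with its shortest path metric $c$, and let $r$ be a root vertex. Let $P=\{p_v: v\in V\}$ be a collection of paths in $G$, $p_v$ from $v$ to $r$, and let $F$ be the set of first edges $(v,v_1)$ of the paths $p_v$. Let $q=(u_1,\ldots,u_t)$ be a walk in $G$ with $t=g/3$ which is good, i.e. at most $t/8$ of its edges $(u_i,u_{i+1})$ lie in $F$ and it contains at least $t/2$ distinct vertices. Let $X$ be the set of distinct vertices of $q$. Then $c(P[X]) = \Omega(|X|\, g)$.
   Context: An $(n,d,\beta)$ expander is a $d$-regular graph on $n$ vertices whose adjacency matrix has second largest eigenvalue $\beta<1$. The girth is the length of a shortest cycle. $c(P[X]) := c(\bigcup_{v\in X}E(p_v))$, the total cost of the union of the edges of the paths $p_v$, $v\in X$; in the shortest path metric each graph edge has cost $1$. The $\Omega$ hides an absolute constant. *)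

theory Defs
  imports Complex_Main "Jordan_Normal_Form.Char_Poly"
begin

definition simple_graph :: "nat \<Rightarrow> (nat \<Rightarrow> nat \<Rightarrow> bool) \<Rightarrow> bool" where
  "simple_graph n E \<longleftrightarrow> (\<forall>u v. E u v \<longrightarrow> u < n \<and> v < n \<and> u \<noteq> v \<and> E v u)"

definition regular :: "nat \<Rightarrow> (nat \<Rightarrow> nat \<Rightarrow> bool) \<Rightarrow> nat \<Rightarrow> bool" where
  "regular n E d \<longleftrightarrow> (\<forall>v<n. card {w. w < n \<and> E v w} = d)"

text \<open>Normalised adjacency matrix (entries 1/d), so that the top eigenvalue is 1.\<close>

definition norm_adj_matrix :: "nat \<Rightarrow> (nat \<Rightarrow> nat \<Rightarrow> bool) \<Rightarrow> nat \<Rightarrow> real mat" where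
  "norm_adj_matrix n E d = mat n n (\<lambda>(i, j). if E i j then 1 / real d else 0)"

text \<open>beta is the second largest eigenvalue of A, eigenvalues counted with (algebraic)
  multiplicity, i.e. the second entry of the non-increasingly sorted list of eigenvalues:
  at most one eigenvalue (with multiplicity) is strictly larger than beta and
  at least two are greater or equal to beta.\<close>

definition eig_mult :: "real mat \<Rightarrow> real \<Rightarrow> nat" where
  "eig_mult A x = order x (char_poly A)"

definition second_largest_eigenvalue :: "real mat \<Rightarrow> real \<Rightarrow> bool" where
  "second_largest_eigenvalue A \<beta> \<longleftrightarrow>
     (\<Sum>x\<in>{x. poly (char_poly A) x = 0 \<and> x > \<beta>}. eig_mult A x) \<le> 1 \<and>
     (\<Sum>x\<in>{x. poly (char_poly A) x = 0 \<and> x \<ge> \<beta>}. eig_mult A x) \<ge> 2"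

definition expander :: "nat \<Rightarrow> (nat \<Rightarrow> nat \<Rightarrow> bool) \<Rightarrow> nat \<Rightarrow> real \<Rightarrow> bool" where
  "expander n E d \<beta> \<longleftrightarrow> simple_graph n E \<and> regular n E d \<and>
     second_largest_eigenvalue (norm_adj_matrix n E d) \<beta> \<and> \<beta> < 1"

definition is_walk :: "nat \<Rightarrow> (nat \<Rightarrow> nat \<Rightarrow> bool) \<Rightarrow> nat list \<Rightarrow> bool" where
  "is_walk n E q \<longleftrightarrow> q \<noteq> [] \<and> set q \<subseteq> {0..<n} \<and>
     (\<forall>i. Suc i < length q \<longrightarrow> E (q ! i) (q ! Suc i))"

definition is_path_from_to :: "nat \<Rightarrow> (nat \<Rightarrow> nat \<Rightarrow> bool) \<Rightarrow> nat list \<Rightarrow> nat \<Rightarrow> nat \<Rightarrow> bool" where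
  "is_path_from_to n E p u v \<longleftrightarrow> is_walk n E p \<and> distinct p \<and> hd p = u \<and> last p = v"

definition is_cycle :: "nat \<Rightarrow> (nat \<Rightarrow> nat \<Rightarrow> bool) \<Rightarrow> nat list \<Rightarrow> bool" where
  "is_cycle n E c \<longleftrightarrow> length c \<ge> 3 \<and> is_walk n E c \<and> distinct c \<and> E (last c) (hd c)"

definition girth :: "nat \<Rightarrow> (nat \<Rightarrow> nat \<Rightarrow> bool) \<Rightarrow> nat \<Rightarrow> bool" where
  "girth n E g \<longleftrightarrow> (\<exists>c. is_cycle n E c \<and> length c = g) \<and>
     (\<forall>c. is_cycle n E c \<longrightarrow> g \<le> length c)"

definition edges_of :: "nat list \<Rightarrow> nat set set" where
  "edges_of p = {{p ! i, p ! Suc i} | i. Suc i < length p}"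

definition first_edges :: "nat \<Rightarrow> (nat \<Rightarrow> nat list) \<Rightarrow> nat set set" where
  "first_edges n p = {{v, p v ! 1} | v. v < n \<and> length (p v) \<ge> 2}"

text \<open>c(P[X]): number of distinct edges in the union of the paths p v, v in X
  (shortest path metric: every edge has cost 1).\<close>

definition union_cost :: "(nat \<Rightarrow> nat list) \<Rightarrow> nat set \<Rightarrow> nat" where
  "union_cost p X = card (\<Union>v\<in>X. edges_of (p v))"

definition good_walk :: "nat \<Rightarrow> (nat \<Rightarrow> nat list) \<Rightarrow> nat list \<Rightarrow> bool" where
  "good_walk n p q \<longleftrightarrow>
     real (card {i. Suc i < length q \<and> {q ! i, q ! Suc i} \<in> first_edges n p}) \<le> real (length q) / 8 \<and>
     real (card (set q)) \<ge> real (length q) / 2"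

end

theory Submission
  imports Defs
begin

text \<open>Call a vertex v of the walk departing if its path p v leaves v along an edge that the
  walk does not use. For departing v the first |q| steps of p v avoid the walk, and for distinct
  departing u, v these initial segments are vertex-disjoint: otherwise a piece of the walk and
  pieces of the paths would give two distinct paths with common ends and total length at most
  3|q| < g + 2, hence a cycle shorter than the girth. So every departing vertex, except possibly
  one whose path reaches r within |q| steps, owns |q| edges of the union of the paths. The other
  vertices of X are r or endpoints of first edges lying on the walk; goodness bounds these by
  2 + 2 |q|/8 \<le> 2 + |X|/2. Hence about |X|/4 departing vertices own |q| \<approx> g/3 edges each.\<close>

definition path_between :: "('a \<Rightarrow> 'a \<Rightarrow> bool) \<Rightarrow> 'a list \<Rightarrow> 'a \<Rightarrow> 'a \<Rightarrow> bool" where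
  "path_between E P u v \<longleftrightarrow> P \<noteq> [] \<and> distinct P \<and> successively E P \<and> hd P = u \<and> last P = v"

definition girth_at_least :: "('a \<Rightarrow> 'a \<Rightarrow> bool) \<Rightarrow> nat \<Rightarrow> bool" where
  "girth_at_least E g \<longleftrightarrow>
     (\<forall>c. 3 \<le> length c \<longrightarrow> distinct c \<longrightarrow> successively E c \<longrightarrow> E (last c) (hd c) \<longrightarrow> g \<le> length c)"

lemma card_le_twice_card_image_doubleton:
  assumes "finite A"
  shows "card A \<le> 2 * card ((\<lambda>v. {v, h v}) ` A)"
proof -
  have "card A \<le> card (\<Union>v\<in>A. {v, h v})"
    using assms by (intro card_mono) auto
  also have "\<dots> \<le> (\<Sum>e\<in>(\<lambda>v. {v, h v}) ` A. card e)"
    by (rule card_Union_le_sum_card)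
  also have "\<dots> \<le> (\<Sum>e\<in>(\<lambda>v. {v, h v}) ` A. 2)"
    by (intro sum_mono) (auto simp: card_insert_if)
  finally show ?thesis by simp
qed

lemma edges_of_conv_image: "edges_of P = (\<lambda>i. {P ! i, P ! Suc i}) ` {..<length P - 1}"
  unfolding edges_of_def by force

lemma finite_edges_of: "finite (edges_of P)"
  by (simp add: edges_of_conv_image)

lemma edges_of_take_subset: "edges_of (take m P) \<subseteq> edges_of P"
  unfolding edges_of_def by force

lemma card_edges_of_distinct:
  assumes "distinct P"
  shows "card (edges_of P) = length P - 1"
proof -
  have "inj_on (\<lambda>i. {P ! i, P ! Suc i}) {..<length P - 1}"
    using assms by (auto simp: inj_on_def doubleton_eq_iff nth_eq_iff_index_eq)
  then show ?thesis by (simp add: edges_of_conv_image card_image)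
qed

lemma successively_slice:
  "successively R xs \<Longrightarrow> successively R (drop a (take b xs))"
  by (metis append_take_drop_id successively_append_iff)

lemma path_between_slice:
  assumes "path_between E P u w" "a \<le> b" "b < length P"
  shows "path_between E (drop a (take (Suc b) P)) (P ! a) (P ! b)"
  using assms by (auto simp: path_between_def successively_slice hd_drop_conv_nth last_conv_nth)

lemma path_between_length_ge_2:
  "path_between E P u v \<Longrightarrow> u \<noteq> v \<Longrightarrow> 2 \<le> length P"
  unfolding path_between_def by (cases P; cases "tl P") auto

lemma path_between_first_step:
  "path_between E P u v \<Longrightarrow> 2 \<le> length P \<Longrightarrow> E u (P ! 1)"
  unfolding path_between_def using successively_nth[of E P 0] by (auto simp: hd_conv_nth)

lemma path_between_rev:
  "symp E \<Longrightarrow> path_between E P u v \<Longrightarrow> path_between E (rev P) v u"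
  unfolding path_between_def
  by (auto simp: hd_rev last_rev elim: successively_mono dest: sympD)

lemma path_between_append:
  assumes "path_between E P u v" "path_between E P' v' w" "E v v'" "set P \<inter> set P' = {}"
  shows "path_between E (P @ P') u w"
  using assms by (auto simp: path_between_def successively_append_iff)

lemma path_between_mono:
  "path_between R P u v \<Longrightarrow> (\<And>x y. R x y \<Longrightarrow> E x y) \<Longrightarrow> path_between E P u v"
  unfolding path_between_def by (auto elim: successively_mono)

lemma walk_contains_path:
  "successively R q \<Longrightarrow> q \<noteq> [] \<Longrightarrow>
     \<exists>Q. path_between R Q (hd q) (last q) \<and> set Q \<subseteq> set q \<and> length Q \<le> length q"
proof (induction "length q" arbitrary: q rule: less_induct)
  case less
  show ?case
  proof (cases "distinct q")
    case True
    then show ?thesis using less.prems by (auto simp: path_between_def)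
  next
    case False
    then obtain xs ys zs x where q: "q = xs @ [x] @ ys @ [x] @ zs"
      using not_distinct_decomp by blast
    define q' where "q' = xs @ x # zs"
    have "successively R (xs @ [x])" "successively R (x # zs)"
      using less.prems(1) successively_append_iff[of R "xs @ [x]" "ys @ x # zs"]
        successively_append_iff[of R "xs @ x # ys" "x # zs"]
      unfolding q by auto
    then have "successively R q'"
      unfolding q'_def by (auto simp: successively_append_iff successively_Cons)
    moreover have "length q' < length q" "q' \<noteq> []" "hd q' = hd q" "last q' = last q" "set q' \<subseteq> set q"
      unfolding q q'_def by (cases xs; auto)+
    ultimately show ?thesis using less.hyps by fastforce
  qed
qed

lemma walk_connects:
  assumes "symp R" "successively R q" "u \<in> set q" "w \<in> set q"
  shows "\<exists>Q. path_between R Q u w \<and> set Q \<subseteq> set q \<and> length Q \<le> length q"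
proof -
  have segment: "\<exists>Q. path_between R Q (q ! a) (q ! b) \<and> set Q \<subseteq> set q \<and> length Q \<le> length q"
    if "a \<le> b" "b < length q" for a b
  proof -
    define S where "S = drop a (take (Suc b) q)"
    have "successively R S" "S \<noteq> []" "hd S = q ! a" "last S = q ! b" "set S \<subseteq> set q"
      "length S \<le> length q"
      using assms(2) that unfolding S_def
      by (auto simp: successively_slice hd_drop_conv_nth last_conv_nth dest: in_set_dropD in_set_takeD)
    then show ?thesis using walk_contains_path[of R S] by fastforce
  qed
  obtain a b where ab: "a < length q" "q ! a = u" "b < length q" "q ! b = w"
    using assms(3,4) by (metis in_set_conv_nth)
  show ?thesis
  proof (cases "a \<le> b")
    case True
    then show ?thesis using segment ab by blast
  next
    case False
    then obtain Q where "path_between R Q w u" "set Q \<subseteq> set q" "length Q \<le> length q"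
      using segment[of b a] ab by auto
    then show ?thesis using path_between_rev[OF assms(1)] by (metis length_rev set_rev)
  qed
qed

lemma internally_disjoint_paths_cycle:
  assumes sym: "symp E" and PA: "path_between E (a # A) a x" and PB: "path_between E (a # B) a x"
    and meet: "set A \<inter> set B = {x}" and diverge: "hd A \<noteq> hd B"
  shows "\<exists>c. 3 \<le> length c \<and> distinct c \<and> successively E c \<and> E (last c) (hd c) \<and>
    length c = length A + length B"
proof -
  have "A \<noteq> []" "B \<noteq> []" using meet by auto
  then have A: "A \<noteq> []" "distinct A" "a \<notin> set A" "successively E (a # A)" "last A = x"
    and B: "B \<noteq> []" "distinct B" "a \<notin> set B" "successively E B" "E a (hd B)" "last B = x"
    using PA PB by (auto simp: path_between_def successively_Cons)
  define B' where "B' = butlast B"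
  have B_split: "B = B' @ [x]" using append_butlast_last_id[OF B(1)] B(6) by (simp add: B'_def)
  define c where "c = a # A @ rev B'"
  have "length c = length A + length B" using B_split by (simp add: c_def)
  moreover have "3 \<le> length c"
  proof -
    have "A \<noteq> [x] \<or> B' \<noteq> []" using diverge B_split by auto
    then have "2 \<le> length A \<or> 1 \<le> length B'" using A by (cases A; cases "tl A"; cases B') auto
    moreover have "1 \<le> length A" using A(1) by (cases A) auto
    moreover have "length c = 1 + length A + length B'" by (simp add: c_def)
    ultimately show ?thesis by linarith
  qed
  moreover have "distinct c"
  proof -
    have "set A \<inter> set B' = {}" using meet B(2) unfolding B_split by auto
    then show ?thesis using A(2,3) B(2,3) unfolding c_def B_split by auto
  qed
  moreover have "successively E c"
  proof -
    have E_sym: "E y x" if "E x y" for x y using sympD[OF sym that] .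
    have "successively E B'" "B' \<noteq> [] \<Longrightarrow> E (last B') x"
      using B(4) unfolding B_split by (auto simp: successively_append_iff)
    then have "successively E (rev B')" "B' \<noteq> [] \<Longrightarrow> E x (hd (rev B'))"
      by (auto simp: hd_rev intro: E_sym elim: successively_mono)
    moreover have "last (a # A) = x" using A(1,5) by simp
    ultimately show ?thesis using A(4)
      unfolding c_def append_Cons[symmetric] successively_append_iff by auto
  qed
  moreover have "E (last c) (hd c)"
  proof -
    have "last c = hd B" using A(1,5) B_split by (cases B') (auto simp: c_def last_rev)
    then show ?thesis using sympD[OF sym B(5)] by (simp add: c_def)
  qed
  ultimately show ?thesis by blast
qed

text \<open>Cutting both paths at the first vertex of xs that lies on ys leaves two internally
  disjoint paths.\<close>

lemma diverging_paths_cycle: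
  assumes sym: "symp E" and P: "path_between E (a # xs) a w" and P': "path_between E (a # ys) a w"
    and xs: "xs \<noteq> []" and ys: "ys \<noteq> []" and diverge: "hd xs \<noteq> hd ys"
  shows "\<exists>c. 3 \<le> length c \<and> distinct c \<and> successively E c \<and> E (last c) (hd c) \<and>
    length c \<le> length xs + length ys"
proof -
  have "last xs = last ys" using P P' xs ys by (simp add: path_between_def)
  then have ex: "\<exists>k. k < length xs \<and> xs ! k \<in> set ys"
    using xs ys by (intro exI[of _ "length xs - 1"]) (auto simp: last_conv_nth)
  define k where "k = (LEAST k. k < length xs \<and> xs ! k \<in> set ys)"
  have k: "k < length xs" "xs ! k \<in> set ys" using LeastI_ex[OF ex] unfolding k_def by auto
  have kmin: "xs ! l \<notin> set ys" if "l < k" for l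
    using not_less_Least k(1) that unfolding k_def by (metis less_trans)
  obtain j where j: "j < length ys" "ys ! j = xs ! k" using k(2) by (metis in_set_conv_nth)
  have PA: "path_between E (a # take (Suc k) xs) a (xs ! k)"
    using path_between_slice[OF P, of 0 "Suc k"] k by simp
  have PB: "path_between E (a # take (Suc j) ys) a (xs ! k)"
    using path_between_slice[OF P', of 0 "Suc j"] j by simp
  have meet: "set (take (Suc k) xs) \<inter> set (take (Suc j) ys) = {xs ! k}"
  proof -
    have "y = xs ! k" if yA: "y \<in> set (take (Suc k) xs)" and yB: "y \<in> set (take (Suc j) ys)" for y
    proof -
      obtain l where "l < length (take (Suc k) xs)" "y = take (Suc k) xs ! l"
        using yA unfolding in_set_conv_nth by blast
      then have "l \<le> k" "y = xs ! l" by auto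
      then show ?thesis using kmin[of l] in_set_takeD[OF yB] by (cases "l < k") auto
    qed
    then have "set (take (Suc k) xs) \<inter> set (take (Suc j) ys) \<subseteq> {xs ! k}" by blast
    moreover have "xs ! k \<in> set (take (Suc k) xs)" "xs ! k \<in> set (take (Suc j) ys)"
      using k(1) j by (simp_all add: take_Suc_conv_app_nth)
    ultimately show ?thesis by blast
  qed
  have "hd (take (Suc k) xs) \<noteq> hd (take (Suc j) ys)" using diverge xs ys by (simp add: hd_take)
  then obtain c where "3 \<le> length c" "distinct c" "successively E c" "E (last c) (hd c)"
    "length c = length (take (Suc k) xs) + length (take (Suc j) ys)"
    using internally_disjoint_paths_cycle[OF sym PA PB meet] by blast
  moreover have "length (take (Suc k) xs) + length (take (Suc j) ys) \<le> length xs + length ys"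
    using k j by simp
  ultimately show ?thesis by (intro exI[of _ c]) auto
qed

lemma two_paths_length:
  assumes sym: "symp E" and girth: "girth_at_least E g"
  shows "path_between E P u v \<Longrightarrow> path_between E P' u v \<Longrightarrow> P \<noteq> P' \<Longrightarrow> g + 2 \<le> length P + length P'"
proof (induction P arbitrary: P' u)
  case Nil
  then show ?case by (simp add: path_between_def)
next
  case (Cons a xs)
  obtain ys where P': "P' = a # ys" using Cons.prems by (cases P') (auto simp: path_between_def)
  have ends: "zs = [] \<longleftrightarrow> v = a" if "path_between E (a # zs) w v" for zs w
  proof (cases zs)
    case (Cons b zs')
    then have "last (a # zs) \<in> set zs" by simp
    then show ?thesis using that Cons unfolding path_between_def by auto
  qed (use that in \<open>auto simp: path_between_def\<close>)
  note ends[OF Cons.prems(1)] ends[OF Cons.prems(2)[unfolded P']]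
  then have xs: "xs \<noteq> []" and ys: "ys \<noteq> []" using Cons.prems(3) P' by auto
  show ?case
  proof (cases "hd xs = hd ys")
    case True
    have "path_between E xs (hd xs) v" "path_between E ys (hd xs) v" "xs \<noteq> ys"
      using Cons.prems xs ys True unfolding P' path_between_def by (auto simp: successively_Cons)
    then have "g + 2 \<le> length xs + length ys" by (rule Cons.IH)
    then show ?thesis using P' by simp
  next
    case False
    then obtain c where "3 \<le> length c" "distinct c" "successively E c" "E (last c) (hd c)"
      "length c \<le> length xs + length ys"
      using diverging_paths_cycle[OF sym, of a xs v ys] Cons.prems xs ys
      unfolding P' path_between_def by auto
    then show ?thesis using girth P' unfolding girth_at_least_def by fastforce
  qed
qed

locale walk_and_root_paths =
  fixes E :: "nat \<Rightarrow> nat \<Rightarrow> bool" and g :: nat and q :: "nat list" and p :: "nat \<Rightarrow> nat list"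
    and r :: nat
  assumes sym: "symp E" and girth: "girth_at_least E g"
    and walk: "successively E q" and short_walk: "3 * length q \<le> g"
    and paths: "\<And>v. v \<in> set q \<Longrightarrow> path_between E (p v) v r"
begin

definition walk_step :: "nat \<Rightarrow> nat \<Rightarrow> bool" where
  "walk_step x y \<longleftrightarrow> {x, y} \<in> edges_of q"

lemma symp_walk_step: "symp walk_step"
  by (auto simp: symp_def walk_step_def insert_commute)

lemma successively_walk_step: "successively walk_step q"
  unfolding walk_step_def edges_of_def successively_conv_nth by blast

lemma walk_step_edge: "walk_step x y \<Longrightarrow> E x y"
  using walk sympD[OF sym]
  unfolding walk_step_def edges_of_def successively_conv_nth by (auto simp: doubleton_eq_iff)

lemma path_nth_0: "v \<in> set q \<Longrightarrow> p v ! 0 = v"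
  using paths by (metis hd_conv_nth path_between_def)

definition departing :: "nat set" where
  "departing = {v \<in> set q. 2 \<le> length (p v) \<and> \<not> walk_step v (p v ! 1)}"

lemma departing_detour_long:
  assumes v: "v \<in> departing" and i: "1 \<le> i" "i < length (p v)"
    and P: "path_between E P v (p v ! i)" "2 \<le> length P" "walk_step v (P ! 1)"
  shows "g + 1 \<le> i + length P"
proof -
  have vq: "v \<in> set q" and off: "\<not> walk_step v (p v ! 1)" using v by (auto simp: departing_def)
  have "path_between E (take (Suc i) (p v)) v (p v ! i)"
    using path_between_slice[OF paths[OF vq], of 0 i] i path_nth_0[OF vq] by simp
  moreover have "take (Suc i) (p v) \<noteq> P" using off P(3) i by auto
  ultimately have "g + 2 \<le> length (take (Suc i) (p v)) + length P"
    using two_paths_length[OF sym girth _ P(1)] by blast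
  then show ?thesis using i by simp
qed

lemma departing_path_avoids_walk:
  assumes v: "v \<in> departing" and i: "1 \<le> i" "i \<le> length q" "i < length (p v)"
  shows "p v ! i \<notin> set q"
proof
  assume w: "p v ! i \<in> set q"
  have vq: "v \<in> set q" using v by (simp add: departing_def)
  obtain Q where Q: "path_between walk_step Q v (p v ! i)" "length Q \<le> length q"
    using walk_connects[OF symp_walk_step successively_walk_step vq w] by blast
  have "p v ! i \<noteq> p v ! 0"
    using paths[OF vq] i by (simp add: path_between_def nth_eq_iff_index_eq)
  then have "2 \<le> length Q" using path_between_length_ge_2[OF Q(1)] path_nth_0[OF vq] by simp
  then have "walk_step v (Q ! 1)" using path_between_first_step[OF Q(1)] by blast
  then have "g + 1 \<le> i + length Q"
    using departing_detour_long[OF v i(1,3) path_between_mono[OF Q(1) walk_step_edge]] \<open>2 \<le> length Q\<close>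
    by blast
  then show False using Q(2) i short_walk by linarith
qed

lemma departing_paths_disjoint:
  assumes u: "u \<in> departing" and v: "v \<in> departing" and "u \<noteq> v"
    and i: "1 \<le> i" "i \<le> length q" "i < length (p u)" and j: "j \<le> length q" "j < length (p v)"
  shows "p u ! i \<noteq> p v ! j"
proof
  assume meet: "p u ! i = p v ! j"
  have uq: "u \<in> set q" and vq: "v \<in> set q" using u v by (auto simp: departing_def)
  show False
  proof (cases "j = 0")
    case True
    then show False using departing_path_avoids_walk[OF u i] meet path_nth_0[OF vq] vq by simp
  next
    case False
    obtain Q where Q: "path_between walk_step Q u v" "set Q \<subseteq> set q" "length Q \<le> length q"
      using walk_connects[OF symp_walk_step successively_walk_step uq vq] by blast
    define T where "T = drop 1 (take (Suc j) (p v))"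
    have T: "path_between E T (p v ! 1) (p v ! j)"
      unfolding T_def using path_between_slice[OF paths[OF vq], of 1 j] False j by simp
    have "p v ! Suc m \<notin> set q" if "m < length T" for m
      using departing_path_avoids_walk[OF v, of "Suc m"] that j by (simp add: T_def)
    then have "set T \<inter> set q = {}" by (auto simp: in_set_conv_nth T_def)
    then have disj: "set Q \<inter> set T = {}" using Q(2) by blast
    have "E v (p v ! 1)"
      using path_between_first_step[OF paths[OF vq]] False j by simp
    then have P: "path_between E (Q @ T) u (p v ! j)"
      using path_between_append[OF path_between_mono[OF Q(1) walk_step_edge] T _ disj] by simp
    have "2 \<le> length Q" using path_between_length_ge_2[OF Q(1) \<open>u \<noteq> v\<close>] .
    moreover have "walk_step u (Q ! 1)" using path_between_first_step[OF Q(1)] calculation .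
    ultimately have "g + 1 \<le> i + length (Q @ T)"
      using departing_detour_long[OF u i(1,3), of "Q @ T"] P meet by (simp add: nth_append)
    then show False using Q(3) i j short_walk by (simp add: T_def)
  qed
qed

lemma card_short_departing_le_1: "card {v \<in> departing. length (p v) \<le> length q} \<le> 1"
proof -
  have "u = v" if "u \<in> departing" "v \<in> departing" "length (p u) \<le> length q"
    "length (p v) \<le> length q" for u v
  proof (rule ccontr)
    assume "u \<noteq> v"
    have "2 \<le> length (p u)" "2 \<le> length (p v)" "u \<in> set q" "v \<in> set q"
      using that by (auto simp: departing_def)
    moreover have "p u ! (length (p u) - 1) = p v ! (length (p v) - 1)"
      using paths[OF \<open>u \<in> set q\<close>] paths[OF \<open>v \<in> set q\<close>]
      by (auto simp: path_between_def last_conv_nth)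
    ultimately show False
      using departing_paths_disjoint[OF that(1,2) \<open>u \<noteq> v\<close>] that(3,4) by fastforce
  qed
  moreover have "finite departing" by (simp add: departing_def)
  ultimately show ?thesis by (auto simp: card_le_Suc0_iff_eq)
qed

definition long_departing :: "nat set" where
  "long_departing = {v \<in> departing. length q < length (p v)}"

lemma long_departing_edges_disjoint:
  assumes u: "u \<in> long_departing" and v: "v \<in> long_departing" and "u \<noteq> v"
  shows "edges_of (take (Suc (length q)) (p u)) \<inter> edges_of (take (Suc (length q)) (p v)) = {}"
proof -
  have "{p u ! k, p u ! Suc k} \<noteq> {p v ! l, p v ! Suc l}"
    if "k < length q" "l < length q" for k l
  proof -
    have "p u ! Suc k \<notin> {p v ! l, p v ! Suc l}"
      using departing_paths_disjoint[of u v "Suc k"] u v \<open>u \<noteq> v\<close> that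
      by (auto simp: long_departing_def)
    then show ?thesis by blast
  qed
  then show ?thesis unfolding edges_of_def by fastforce
qed

lemma card_long_departing_mult_le: "card long_departing * length q \<le> union_cost p (set q)"
proof -
  let ?W = "\<lambda>v. edges_of (take (Suc (length q)) (p v))"
  have sub: "long_departing \<subseteq> set q" by (auto simp: long_departing_def departing_def)
  have "card (?W v) = length q" if "v \<in> long_departing" for v
    using that sub paths card_edges_of_distinct[of "take (Suc (length q)) (p v)"]
    by (auto simp: long_departing_def path_between_def)
  then have "card long_departing * length q = (\<Sum>v\<in>long_departing. card (?W v))" by simp
  also have "\<dots> = card (\<Union>v\<in>long_departing. ?W v)"
    using long_departing_edges_disjoint finite_subset[OF sub]
    by (simp add: card_UN_disjoint finite_edges_of)
  also have "\<dots> \<le> union_cost p (set q)"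
    unfolding union_cost_def
    by (intro card_mono UN_mono sub edges_of_take_subset) (simp add: finite_edges_of)
  finally show ?thesis .
qed

lemma card_walk_vertices_le:
  "card (set q) \<le> card long_departing + 2 + card {v \<in> set q. 2 \<le> length (p v) \<and> walk_step v (p v ! 1)}"
proof -
  let ?N = "{v \<in> set q. 2 \<le> length (p v) \<and> walk_step v (p v ! 1)}"
  let ?S = "{v \<in> departing. length (p v) \<le> length q}"
  have "v = r" if "v \<in> set q" "length (p v) < 2" for v
    using paths[OF that(1)] that(2) by (cases "p v"; cases "tl (p v)") (auto simp: path_between_def)
  then have "set q \<subseteq> long_departing \<union> ?S \<union> {r} \<union> ?N"
    by (force simp: long_departing_def departing_def)
  then have "card (set q) \<le> card (long_departing \<union> ?S \<union> {r} \<union> ?N)"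
    by (intro card_mono) (auto simp: long_departing_def departing_def)
  also have "\<dots> \<le> card long_departing + card ?S + card {r} + card ?N"
    by (meson card_Un_le add_le_mono order_trans le_refl)
  finally show ?thesis using card_short_departing_le_1 by simp
qed

lemma card_first_step_on_walk_le:
  assumes "set q \<subseteq> {..<n}"
  shows "card {v \<in> set q. 2 \<le> length (p v) \<and> walk_step v (p v ! 1)}
    \<le> 2 * card {i. Suc i < length q \<and> {q ! i, q ! Suc i} \<in> first_edges n p}"
proof -
  let ?N = "{v \<in> set q. 2 \<le> length (p v) \<and> walk_step v (p v ! 1)}"
  let ?I = "{i. Suc i < length q \<and> {q ! i, q ! Suc i} \<in> first_edges n p}"
  have fin: "finite ?I" by (rule finite_subset[of _ "{..<length q}"]) auto
  have "(\<lambda>v. {v, p v ! 1}) ` ?N \<subseteq> (\<lambda>i. {q ! i, q ! Suc i}) ` ?I"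
    using assms by (auto simp: walk_step_def edges_of_def first_edges_def)
  then have "card ((\<lambda>v. {v, p v ! 1}) ` ?N) \<le> card ((\<lambda>i. {q ! i, q ! Suc i}) ` ?I)"
    using fin by (intro card_mono) simp_all
  also have "\<dots> \<le> card ?I" using fin by (rule card_image_le)
  finally have "card ((\<lambda>v. {v, p v ! 1}) ` ?N) \<le> card ?I" .
  then show ?thesis using card_le_twice_card_image_doubleton[of ?N "\<lambda>v. p v ! 1"] by simp
qed

end

lemma simple_graph_symp: "simple_graph n E \<Longrightarrow> symp E"
  by (auto simp: simple_graph_def symp_def)

lemma is_walk_iff: "is_walk n E q \<longleftrightarrow> q \<noteq> [] \<and> set q \<subseteq> {..<n} \<and> successively E q"
  by (auto simp: is_walk_def successively_conv_nth)

lemma is_path_from_to_imp_path_between: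
  "is_path_from_to n E P u v \<Longrightarrow> path_between E P u v"
  by (simp add: is_path_from_to_def is_walk_iff path_between_def)

lemma girth_imp_girth_at_least:
  assumes "simple_graph n E" "girth n E g"
  shows "girth_at_least E g"
  unfolding girth_at_least_def
proof (intro allI impI)
  fix c :: "nat list"
  assume c: "3 \<le> length c" "distinct c" "successively E c" "E (last c) (hd c)"
  have "set c \<subseteq> {..<n}"
  proof
    fix x assume "x \<in> set c"
    then obtain k where k: "k < length c" "x = c ! k" by (metis in_set_conv_nth)
    have "E (c ! k) (c ! Suc k) \<or> E (c ! (k - 1)) (c ! k)"
      using successively_nth[OF c(3), of k] successively_nth[OF c(3), of "k - 1"] k c(1)
      by (cases "Suc k < length c") auto
    then show "x \<in> {..<n}" using assms(1) k by (auto simp: simple_graph_def)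
  qed
  then have "is_cycle n E c" using c by (auto simp: is_cycle_def is_walk_iff)
  then show "g \<le> length c" using assms(2) by (simp add: girth_def)
qed

lemma good_walk_union_cost_ge:
  assumes graph: "simple_graph n E" and girth: "girth n E g" and large: "100 \<le> g"
    and paths: "\<forall>v<n. is_path_from_to n E (p v) v r" and walk: "is_walk n E q"
    and length: "length q = g div 3" and good: "good_walk n p q"
  shows "1/16 * real (card (set q)) * real g \<le> real (union_cost p (set q))"
proof -
  have q: "successively E q" "set q \<subseteq> {..<n}" using walk by (auto simp: is_walk_iff)
  interpret walk_and_root_paths E g q p r
    using simple_graph_symp[OF graph] girth_imp_girth_at_least[OF graph girth] q length paths
    by unfold_locales (auto intro: is_path_from_to_imp_path_between)
  let ?I = "{i. Suc i < length q \<and> {q ! i, q ! Suc i} \<in> first_edges n p}"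
  have X: "card (set q) \<le> card long_departing + 2 + 2 * card ?I"
    using card_walk_vertices_le card_first_step_on_walk_le[OF q(2)] by linarith
  have cost: "real (card long_departing) * real (length q) \<le> real (union_cost p (set q))"
    using card_long_departing_mult_le by (metis of_nat_le_iff of_nat_mult)
  have "real (card ?I) \<le> real (length q) / 8" "real (length q) / 2 \<le> real (card (set q))"
    using good by (auto simp: good_walk_def)
  moreover have "g \<le> 3 * length q + 2" "33 \<le> length q" using length large by auto
  ultimately have "real (card (set q)) / 4 \<le> real (card long_departing)" "real g / 4 \<le> real (length q)"
    using X by linarith+
  then have "real (card (set q)) / 4 * (real g / 4) \<le> real (card long_departing) * real (length q)"
    by (intro mult_mono) auto
  then show ?thesis using cost by simp
qed

theorem lemma7:
  "\<exists>(C::real) (g\<^sub>0::nat). C > 0 \<and>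
    (\<forall>(n::nat) (E::nat \<Rightarrow> nat \<Rightarrow> bool) (d::nat) (\<beta>::real) (g::nat) (r::nat)
       (p::nat \<Rightarrow> nat list) (q::nat list).
       expander n E d \<beta> \<longrightarrow> girth n E g \<longrightarrow> g \<ge> g\<^sub>0 \<longrightarrow> r < n \<longrightarrow>
       (\<forall>v<n. is_path_from_to n E (p v) v r) \<longrightarrow>
       is_walk n E q \<longrightarrow> length q = g div 3 \<longrightarrow> good_walk n p q \<longrightarrow>
       real (union_cost p (set q)) \<ge> C * real (card (set q)) * real g)"
proof (intro exI[of _ "1/16"] exI[of _ 100] conjI allI impI)
  fix n E d \<beta> g r p q
  assume "expander n E d \<beta>" "girth n E g" "100 \<le> g"
    "\<forall>v<n. is_path_from_to n E (p v) v r" "is_walk n E q" "length q = g div 3" "good_walk n p q"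
  then show "1/16 * real (card (set q)) * real g \<le> real (union_cost p (set q))"
    by (intro good_walk_union_cost_ge) (auto simp: expander_def)
qed simp

end
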